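(* Let $(X,d,f)$ be a dynamical system with $f$ uniformly continuous, let $(\hat X,\hat d)$ be the completion of $(X,d)$ and $\hat f$ the (uniformly continuous) extension of $f$ to $\hat X$. If $(X,d,f)$ has the shadowing property, then so does $(\hat X,\hat d,\hat f)$; and if $(X,d,f)$ has the finite shadowing property, then so does $(\hat X,\hat d,\hat f)$.
   Context: A dynamical system $(X,d,f)$ is a separable metric space with continuous $f:X\to X$. A $\delta$-pseudo-orbit is a finite or infinite sequence $(x_n)$ with $d(f(x_n),x_{n+1})<\delta$ for consecutive indices; $x$ $\varepsilon$-shadows it if $d(f^n(x),x_n)<\varepsilon$ for all indices. Finite shadowing property: for every $\varepsilon>0$ there is $\delta>0$ such that every finite $\delta$-pseudo-orbit is $\varepsilon$-shadowed by some point; shadowing property: same with infinite pseudo-orbits. *)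

theory Defs
  imports "HOL-Analysis.Analysis"
begin

definition finite_shadowing :: "'a::metric_space set \<Rightarrow> ('a \<Rightarrow> 'a) \<Rightarrow> bool" where
  "finite_shadowing S f \<longleftrightarrow>
     (\<forall>\<epsilon>>0. \<exists>\<delta>>0. \<forall>(n::nat) (x::nat \<Rightarrow> 'a).
        (\<forall>i\<le>n. x i \<in> S) \<and> (\<forall>i<n. dist (f (x i)) (x (Suc i)) < \<delta>) \<longrightarrow>
        (\<exists>y\<in>S. \<forall>i\<le>n. dist ((f ^^ i) y) (x i) < \<epsilon>))"

definition shadowing :: "'a::metric_space set \<Rightarrow> ('a \<Rightarrow> 'a) \<Rightarrow> bool" where
  "shadowing S f \<longleftrightarrow>
     (\<forall>\<epsilon>>0. \<exists>\<delta>>0. \<forall>x::nat \<Rightarrow> 'a.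
        (\<forall>i. x i \<in> S) \<and> (\<forall>i. dist (f (x i)) (x (Suc i)) < \<delta>) \<longrightarrow>
        (\<exists>y\<in>S. \<forall>i. dist ((f ^^ i) y) (x i) < \<epsilon>))"

end

theory Submission
  imports Defs
begin

text \<open>Approximate a pseudo-orbit of \<open>g\<close> in the closure pointwise by points \<open>e x\<^sub>i\<close> with
  \<open>x\<^sub>i \<in> X\<close>. Since \<open>g\<close> is uniformly continuous and \<open>g \<circ> e = e \<circ> f\<close> on \<open>X\<close>, the \<open>x\<^sub>i\<close> form a
  pseudo-orbit of \<open>f\<close> with a slightly larger error, so some \<open>u \<in> X\<close> shadows it, and \<open>e u\<close> then
  shadows the original pseudo-orbit. Nothing in this argument depends on the pseudo-orbit
  being finite or infinite, so it is done once for pseudo-orbits indexed by an arbitrary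
  family \<open>\<I>\<close> of index sets.\<close>

definition shadowing_for :: "nat set set \<Rightarrow> 'a::metric_space set \<Rightarrow> ('a \<Rightarrow> 'a) \<Rightarrow> bool" where
  "shadowing_for \<I> S f \<longleftrightarrow>
     (\<forall>\<epsilon>>0. \<exists>\<delta>>0. \<forall>I\<in>\<I>. \<forall>x.
        (\<forall>i\<in>I. x i \<in> S) \<and> (\<forall>i. i \<in> I \<and> Suc i \<in> I \<longrightarrow> dist (f (x i)) (x (Suc i)) < \<delta>) \<longrightarrow>
        (\<exists>y\<in>S. \<forall>i\<in>I. dist ((f ^^ i) y) (x i) < \<epsilon>))"

lemma shadowing_forI:
  assumes "\<And>\<epsilon>. \<epsilon> > 0 \<Longrightarrow> \<exists>\<delta>>0. \<forall>I\<in>\<I>. \<forall>x. (\<forall>i\<in>I. x i \<in> S) \<and>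
      (\<forall>i. i \<in> I \<and> Suc i \<in> I \<longrightarrow> dist (f (x i)) (x (Suc i)) < \<delta>) \<longrightarrow>
      (\<exists>y\<in>S. \<forall>i\<in>I. dist ((f ^^ i) y) (x i) < \<epsilon>)"
  shows "shadowing_for \<I> S f"
  unfolding shadowing_for_def by (intro allI impI) (rule assms)

lemma shadowing_forE:
  assumes "shadowing_for \<I> S f" and "\<epsilon> > 0"
  obtains \<delta> where "\<delta> > 0"
    and "\<And>I x. I \<in> \<I> \<Longrightarrow> \<forall>i\<in>I. x i \<in> S \<Longrightarrow>
      \<forall>i. i \<in> I \<and> Suc i \<in> I \<longrightarrow> dist (f (x i)) (x (Suc i)) < \<delta> \<Longrightarrow>
      \<exists>y\<in>S. \<forall>i\<in>I. dist ((f ^^ i) y) (x i) < \<epsilon>"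
proof -
  from assms(1)[unfolded shadowing_for_def, rule_format, OF assms(2)]
  obtain \<delta> where "\<delta> > 0" and "\<forall>I\<in>\<I>. \<forall>x. (\<forall>i\<in>I. x i \<in> S) \<and>
      (\<forall>i. i \<in> I \<and> Suc i \<in> I \<longrightarrow> dist (f (x i)) (x (Suc i)) < \<delta>) \<longrightarrow>
      (\<exists>y\<in>S. \<forall>i\<in>I. dist ((f ^^ i) y) (x i) < \<epsilon>)"
    by blast
  then show ?thesis by (intro that) auto
qed

lemma shadowing_eq_shadowing_for: "shadowing S f \<longleftrightarrow> shadowing_for {UNIV} S f"
  unfolding shadowing_def shadowing_for_def by simp

lemma finite_shadowing_eq_shadowing_for: "finite_shadowing S f \<longleftrightarrow> shadowing_for (range atMost) S f"
proof -
  have "i \<in> {..n} \<and> Suc i \<in> {..n} \<longleftrightarrow> i < n" for i n :: nat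
    by auto
  then show ?thesis
    unfolding finite_shadowing_def shadowing_for_def ball_simps by (simp only: Ball_def atMost_iff)
qed

lemma funpow_semiconj:
  assumes "f ` X \<subseteq> X" and "\<forall>x\<in>X. g (e x) = e (f x)" and "z \<in> X"
  shows "(g ^^ i) (e z) = e ((f ^^ i) z)"
  using assms(3)
proof (induction i arbitrary: z)
  case (Suc i)
  have "f z \<in> X" using Suc.prems assms(1) by blast
  have "(g ^^ Suc i) (e z) = (g ^^ i) (e (f z))"
    using Suc.prems assms(2) by (simp add: funpow_Suc_right del: funpow.simps)
  also have "\<dots> = e ((f ^^ Suc i) z)"
    using Suc.IH[OF \<open>f z \<in> X\<close>] by (simp add: funpow_Suc_right del: funpow.simps)
  finally show ?case .
qed simp

lemma funpow_semiconj_dist: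
  assumes f_maps: "f ` X \<subseteq> X" and g_ext: "\<forall>x\<in>X. g (e x) = e (f x)"
    and e_iso: "\<forall>x\<in>X. \<forall>y\<in>X. dist (e x) (e y) = dist x y"
    and "u \<in> X" and "x \<in> X"
  shows "dist ((g ^^ i) (e u)) (e x) = dist ((f ^^ i) u) x"
proof -
  have "(f ^^ i) u \<in> X"
    using f_maps \<open>u \<in> X\<close> by (induction i) auto
  then show ?thesis
    using funpow_semiconj[OF f_maps g_ext \<open>u \<in> X\<close>] e_iso \<open>x \<in> X\<close> by simp
qed

lemma shadow_pushforward:
  assumes f_maps: "f ` X \<subseteq> X" and g_ext: "\<forall>x\<in>X. g (e x) = e (f x)"
    and e_iso: "\<forall>x\<in>X. \<forall>y\<in>X. dist (e x) (e y) = dist x y"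
    and "u \<in> X" and u: "\<forall>i\<in>I. dist ((f ^^ i) u) (x i) < s"
    and x: "\<forall>i\<in>I. x i \<in> X \<and> dist (y i) (e (x i)) < r"
  shows "\<forall>i\<in>I. dist ((g ^^ i) (e u)) (y i) < s + r"
proof
  fix i
  assume "i \<in> I"
  have "dist ((g ^^ i) (e u)) (y i) \<le> dist ((g ^^ i) (e u)) (e (x i)) + dist (y i) (e (x i))"
    by (rule dist_triangle2)
  also have "\<dots> < s + r"
    using funpow_semiconj_dist[OF f_maps g_ext e_iso \<open>u \<in> X\<close>] u x \<open>i \<in> I\<close>
    by (intro add_strict_mono) auto
  finally show "dist ((g ^^ i) (e u)) (y i) < s + r" .
qed

lemma approximate_in_closure_image:
  assumes "\<forall>i\<in>I. y i \<in> closure (e ` X)" and "r > 0"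
  shows "\<exists>x. \<forall>i\<in>I. x i \<in> X \<and> dist (y i) (e (x i)) < r"
proof -
  have "\<exists>x\<in>X. dist (y i) (e x) < r" if "i \<in> I" for i
    using assms that closure_approachable[of "y i" "e ` X"] by (fastforce simp: dist_commute)
  then show ?thesis by metis
qed

lemma pseudo_orbit_pullback:
  assumes e_iso: "\<forall>x\<in>X. \<forall>y\<in>X. dist (e x) (e y) = dist x y"
    and f_maps: "f ` X \<subseteq> X"
    and g_ext: "\<forall>x\<in>X. g (e x) = e (f x)"
    and g_close: "\<And>a b. a \<in> closure (e ` X) \<Longrightarrow> b \<in> closure (e ` X) \<Longrightarrow> dist a b < r \<Longrightarrow>
      dist (g a) (g b) < \<delta>"
    and r: "r \<le> \<delta>"
    and a: "a \<in> closure (e ` X)" and x: "x \<in> X" and ax: "dist a (e x) < r"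
    and ab: "dist (g a) b < \<delta>" and x': "x' \<in> X" and bx': "dist b (e x') < r"
  shows "dist (f x) x' < 3 * \<delta>"
proof -
  have ex: "e x \<in> closure (e ` X)"
    using x by (rule closure_subset[THEN subsetD, OF imageI])
  have "dist (g (e x)) (g a) < \<delta>"
    using g_close[OF ex a] ax by (simp add: dist_commute)
  have "dist (f x) x' = dist (g (e x)) (e x')"
    using e_iso g_ext x x' f_maps by auto
  also have "\<dots> \<le> dist (g (e x)) (g a) + dist (g a) b + dist b (e x')"
    using dist_triangle[of "g (e x)" "e x'" "g a"] dist_triangle[of "g a" "e x'" b] by linarith
  finally show ?thesis
    using \<open>dist (g (e x)) (g a) < \<delta>\<close> ab bx' r by linarith
qed

lemma shadowing_for_closure_isometric_image:
  assumes shadow: "shadowing_for \<I> X f"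
    and f_maps: "f ` X \<subseteq> X"
    and e_iso: "\<forall>x\<in>X. \<forall>y\<in>X. dist (e x) (e y) = dist x y"
    and g_uc: "uniformly_continuous_on (closure (e ` X)) g"
    and g_ext: "\<forall>x\<in>X. g (e x) = e (f x)"
  shows "shadowing_for \<I> (closure (e ` X)) g"
proof (rule shadowing_forI)
  let ?Y = "closure (e ` X)"
  fix \<epsilon> :: real
  assume "\<epsilon> > 0"
  then have "\<epsilon> / 2 > 0" by simp
  with shadow obtain d where "d > 0" and shadow_d: "\<And>I x. I \<in> \<I> \<Longrightarrow> \<forall>i\<in>I. x i \<in> X \<Longrightarrow>
      \<forall>i. i \<in> I \<and> Suc i \<in> I \<longrightarrow> dist (f (x i)) (x (Suc i)) < d \<Longrightarrow>
      \<exists>u\<in>X. \<forall>i\<in>I. dist ((f ^^ i) u) (x i) < \<epsilon> / 2"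
    by (rule shadowing_forE) blast
  define \<delta> where "\<delta> = d / 3"
  have "\<delta> > 0" and "3 * \<delta> = d" using \<open>d > 0\<close> by (simp_all add: \<delta>_def)
  obtain \<eta> where "\<eta> > 0"
    and g_close: "\<And>a b. a \<in> ?Y \<Longrightarrow> b \<in> ?Y \<Longrightarrow> dist b a < \<eta> \<Longrightarrow> dist (g b) (g a) < \<delta>"
    using uniformly_continuous_onE[OF g_uc \<open>\<delta> > 0\<close>] by blast
  define r where "r = min \<eta> (min (\<epsilon> / 2) \<delta>)"
  have "r > 0" using \<open>\<eta> > 0\<close> \<open>\<epsilon> > 0\<close> \<open>\<delta> > 0\<close> by (simp add: r_def)
  have "r \<le> \<delta>" and "r \<le> \<epsilon> / 2" by (simp_all add: r_def)
  have g_close_r: "dist (g a) (g b) < \<delta>" if "a \<in> ?Y" "b \<in> ?Y" "dist a b < r" for a b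
    using g_close[OF that(2,1)] that(3) by (simp add: r_def dist_commute)
  show "\<exists>\<delta>>0. \<forall>I\<in>\<I>. \<forall>y. (\<forall>i\<in>I. y i \<in> ?Y) \<and>
      (\<forall>i. i \<in> I \<and> Suc i \<in> I \<longrightarrow> dist (g (y i)) (y (Suc i)) < \<delta>) \<longrightarrow>
      (\<exists>z\<in>?Y. \<forall>i\<in>I. dist ((g ^^ i) z) (y i) < \<epsilon>)"
  proof (intro exI[of _ \<delta>] conjI ballI allI impI \<open>\<delta> > 0\<close>; elim conjE)
    fix I y
    assume "I \<in> \<I>" and y_in: "\<forall>i\<in>I. y i \<in> ?Y"
      and y_pseudo: "\<forall>i. i \<in> I \<and> Suc i \<in> I \<longrightarrow> dist (g (y i)) (y (Suc i)) < \<delta>"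
    obtain x where x: "\<forall>i\<in>I. x i \<in> X \<and> dist (y i) (e (x i)) < r"
      using approximate_in_closure_image[OF y_in \<open>r > 0\<close>] by blast
    have "dist (f (x i)) (x (Suc i)) < d" if "i \<in> I" "Suc i \<in> I" for i
      unfolding \<open>3 * \<delta> = d\<close>[symmetric] using y_in y_pseudo x that
      by (intro pseudo_orbit_pullback[OF e_iso f_maps g_ext g_close_r \<open>r \<le> \<delta>\<close>]) auto
    then obtain u where "u \<in> X" and "\<forall>i\<in>I. dist ((f ^^ i) u) (x i) < \<epsilon> / 2"
      using shadow_d[OF \<open>I \<in> \<I>\<close>, of x] x by blast
    then have "\<forall>i\<in>I. dist ((g ^^ i) (e u)) (y i) < \<epsilon> / 2 + r"
      using shadow_pushforward[OF f_maps g_ext e_iso \<open>u \<in> X\<close>] x by blast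
    then have "\<forall>i\<in>I. dist ((g ^^ i) (e u)) (y i) < \<epsilon>"
      using \<open>r \<le> \<epsilon> / 2\<close> by fastforce
    moreover have "e u \<in> ?Y"
      using \<open>u \<in> X\<close> by (rule closure_subset[THEN subsetD, OF imageI])
    ultimately show "\<exists>z\<in>?Y. \<forall>i\<in>I. dist ((g ^^ i) z) (y i) < \<epsilon>"
      by blast
  qed
qed

theorem theorem2p7:
  fixes X :: "'a::metric_space set" and f :: "'a \<Rightarrow> 'a"
    and e :: "'a \<Rightarrow> 'b::complete_space" and g :: "'b \<Rightarrow> 'b"
  assumes sep: "separable_space (subtopology euclidean X)"
    and f_maps: "f ` X \<subseteq> X"
    and f_uc: "uniformly_continuous_on X f"
    and e_iso: "\<forall>x\<in>X. \<forall>y\<in>X. dist (e x) (e y) = dist x y"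
    and g_maps: "g ` closure (e ` X) \<subseteq> closure (e ` X)"
    and g_uc: "uniformly_continuous_on (closure (e ` X)) g"
    and g_ext: "\<forall>x\<in>X. g (e x) = e (f x)"
  shows "(shadowing X f \<longrightarrow> shadowing (closure (e ` X)) g) \<and>
         (finite_shadowing X f \<longrightarrow> finite_shadowing (closure (e ` X)) g)"
  using shadowing_for_closure_isometric_image[OF _ f_maps e_iso g_uc g_ext]
  by (simp add: shadowing_eq_shadowing_for finite_shadowing_eq_shadowing_for)

end
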